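(* Assume that $\varphi$ satisfies Conditions (C1), (C2), (C3), (C4) described in the context, with constants $1<p_-\le p_+$, $\beta\ge 1$. For $u\in L_{1,loc}(\Omega)$ let $G(u):=F(u)+\int_\Omega|u(x)|^{p_-}dx$ and $g(u):=\inf\{\lambda>0: G(u/\lambda)\le1\}$. Then $g$ is a norm on $\mathcal L(\Omega)$, and for all $u\in\mathcal L(\Omega)$ $$\tfrac12 f(u)\le g(u)\le \beta^{1/p_-}f(u).$$
   Context: Let $d\ge 1$ and let $\Omega\subseteq\mathbb R^d$ be a domain (open set, bounded or unbounded, possibly $\Omega=\mathbb R^d$). Functions are complex-valued. Let $a\in L_1(\mathbb R^d)$, $a\ge 0$, and suppose there is a non-empty ball $B_0$ centered at $0$ with $a(z)\ge c_0>0$ for a.e. $z\in B_0$. If $\Omega$ is not connected and $\Omega_1,\Omega_2,\dots$ are its connected components, assume $\operatorname{dist}(\Omega_i,\Omega_{i+1})<\operatorname{diam}B_0$ for all $i$. A real function $r$ on $[0,\infty)$ is almost increasing (resp. almost decreasing) with constant $\beta\ge1$ if $r(s)\le\beta r(t)$ (resp. $\beta r(s)\ge r(t)$) for all $0\le s\le t$. Let $\varphi:[0,\infty)\times\Omega\times\Omega\to[0,\infty)$. Conditions: (C1) for each $u\in L_{1,loc}(\Omega)$ the function $(x,y)\mapsto\varphi(|u(x)-u(y)|,x,y)$ is measurable on $\Omega\times\Omega$; (C2) for every $\varepsilon>0$ there is $\delta\in(0,1)$ such that $\varphi(\frac{s+t}{2},x,y)\le(1-\delta)\frac{\varphi(s,x,y)+\varphi(t,x,y)}{2}$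 for a.e. $(x,y)$ and all $s,t>0$ with $|s-t|\ge\varepsilon\max\{s,t\}$; (C3) there are constants $1<p_-\le p_+$ and $\beta\ge1$ such that for a.e. $(x,y)$ the function $t\mapsto\varphi(t,x,y)/t^{p_-}$ is almost increasing with constant $\beta$ and $t\mapsto\varphi(t,x,y)/t^{p_+}$ is almost decreasing with constant $\beta$; (C4) for a.e. $(x,y)$: $c_1^{-1}\le\varphi(1,x,y)\le c_1$ with a constant $c_1>0$, $\varphi(0,x,y)=0$, and $\varphi(t,x,y)>0$ for $t>0$. Define for $u\in L_{1,loc}(\Omega)$: $F(u)=\int_{\Omega\times\Omega}\varphi(|u(x)-u(y)|,x,y)\,a(x-y)\,dx\,dy\in[0,+\infty]$, $|u|_{p,\Omega}=\inf\{\lambda>0: F(u/\lambda)\le1\}$, $f(u)=|u|_{p,\Omega}+\|u\|_{L_{p_-}(\Omega)}$, and $\mathcal L(\Omega)=\{u\in L_{p_-,loc}(\Omega): f(u)<+\infty\}$. *)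

theory Defs
  imports "HOL-Analysis.Analysis"
begin

text \<open>Functions on \<Omega> \<subseteq> R^d are modelled as functions 'a \<Rightarrow> complex with 'a a euclidean space.\<close>

definition loc_integrable :: "'a::euclidean_space set \<Rightarrow> ('a \<Rightarrow> complex) \<Rightarrow> bool" where
  "loc_integrable \<Omega> u \<longleftrightarrow> u \<in> borel_measurable (lebesgue_on \<Omega>) \<and>
     (\<forall>K. compact K \<and> K \<subseteq> \<Omega> \<longrightarrow> integrable (lebesgue_on K) u)"

definition loc_Lp :: "real \<Rightarrow> 'a::euclidean_space set \<Rightarrow> ('a \<Rightarrow> complex) \<Rightarrow> bool" where
  "loc_Lp p \<Omega> u \<longleftrightarrow> u \<in> borel_measurable (lebesgue_on \<Omega>) \<and>
     (\<forall>K. compact K \<and> K \<subseteq> \<Omega> \<longrightarrow> (\<integral>\<^sup>+ x. ennreal (cmod (u x) powr p) \<partial>lebesgue_on K) < \<infinity>)"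

definition almost_incr_on :: "real set \<Rightarrow> real \<Rightarrow> (real \<Rightarrow> real) \<Rightarrow> bool" where
  "almost_incr_on S \<beta> r \<longleftrightarrow> (\<forall>s\<in>S. \<forall>t\<in>S. s \<le> t \<longrightarrow> r s \<le> \<beta> * r t)"

definition almost_decr_on :: "real set \<Rightarrow> real \<Rightarrow> (real \<Rightarrow> real) \<Rightarrow> bool" where
  "almost_decr_on S \<beta> r \<longleftrightarrow> (\<forall>s\<in>S. \<forall>t\<in>S. s \<le> t \<longrightarrow> \<beta> * r s \<ge> r t)"

definition Ffun :: "'a::euclidean_space set \<Rightarrow> ('a \<Rightarrow> real) \<Rightarrow> (real \<Rightarrow> 'a \<Rightarrow> 'a \<Rightarrow> real)
    \<Rightarrow> ('a \<Rightarrow> complex) \<Rightarrow> ennreal" where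
  "Ffun \<Omega> a \<phi> u = (\<integral>\<^sup>+ z. ennreal (\<phi> (cmod (u (fst z) - u (snd z))) (fst z) (snd z) * a (fst z - snd z))
      \<partial>lebesgue_on (\<Omega> \<times> \<Omega>))"

text \<open>Luxemburg-type gauge: inf {l > 0. H(u/l) \<le> 1} (= \<infinity> if the set is empty).\<close>
definition gauge :: "(('a \<Rightarrow> complex) \<Rightarrow> ennreal) \<Rightarrow> ('a \<Rightarrow> complex) \<Rightarrow> ennreal" where
  "gauge H u = Inf {ennreal l | l. l > 0 \<and> H (\<lambda>x. u x / complex_of_real l) \<le> 1}"

definition modp :: "real \<Rightarrow> 'a::euclidean_space set \<Rightarrow> ('a \<Rightarrow> complex) \<Rightarrow> ennreal" where
  "modp p \<Omega> u = (\<integral>\<^sup>+ x. ennreal (cmod (u x) powr p) \<partial>lebesgue_on \<Omega>)"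

definition Lp_norm :: "real \<Rightarrow> 'a::euclidean_space set \<Rightarrow> ('a \<Rightarrow> complex) \<Rightarrow> ennreal" where
  "Lp_norm p \<Omega> u = (if modp p \<Omega> u = \<infinity> then \<infinity> else ennreal (enn2real (modp p \<Omega> u) powr (1 / p)))"

definition seminorm_p :: "'a::euclidean_space set \<Rightarrow> ('a \<Rightarrow> real) \<Rightarrow> (real \<Rightarrow> 'a \<Rightarrow> 'a \<Rightarrow> real)
    \<Rightarrow> ('a \<Rightarrow> complex) \<Rightarrow> ennreal" where
  "seminorm_p \<Omega> a \<phi> u = gauge (Ffun \<Omega> a \<phi>) u"

definition fnorm :: "real \<Rightarrow> 'a::euclidean_space set \<Rightarrow> ('a \<Rightarrow> real) \<Rightarrow> (real \<Rightarrow> 'a \<Rightarrow> 'a \<Rightarrow> real)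
    \<Rightarrow> ('a \<Rightarrow> complex) \<Rightarrow> ennreal" where
  "fnorm pm \<Omega> a \<phi> u = seminorm_p \<Omega> a \<phi> u + Lp_norm pm \<Omega> u"

definition Gfun :: "real \<Rightarrow> 'a::euclidean_space set \<Rightarrow> ('a \<Rightarrow> real) \<Rightarrow> (real \<Rightarrow> 'a \<Rightarrow> 'a \<Rightarrow> real)
    \<Rightarrow> ('a \<Rightarrow> complex) \<Rightarrow> ennreal" where
  "Gfun pm \<Omega> a \<phi> u = Ffun \<Omega> a \<phi> u + modp pm \<Omega> u"

definition gnorm :: "real \<Rightarrow> 'a::euclidean_space set \<Rightarrow> ('a \<Rightarrow> real) \<Rightarrow> (real \<Rightarrow> 'a \<Rightarrow> 'a \<Rightarrow> real)
    \<Rightarrow> ('a \<Rightarrow> complex) \<Rightarrow> ennreal" where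
  "gnorm pm \<Omega> a \<phi> u = gauge (Gfun pm \<Omega> a \<phi>) u"

definition Lspace :: "real \<Rightarrow> 'a::euclidean_space set \<Rightarrow> ('a \<Rightarrow> real) \<Rightarrow> (real \<Rightarrow> 'a \<Rightarrow> 'a \<Rightarrow> real)
    \<Rightarrow> ('a \<Rightarrow> complex) set" where
  "Lspace pm \<Omega> a \<phi> = {u. loc_Lp pm \<Omega> u \<and> fnorm pm \<Omega> a \<phi> u < \<infinity>}"

end

(*
  The gauge g is built from the modular G = F + \<integral>|u|^p-, and a Luxemburg gauge is a norm as soon
  as its modular is convex and unchanged by unimodular factors. The real content is that
  \<phi>(., x, y) is convex for a.e. (x, y): (C2) makes it midpoint convex, the growth bounds of (C3)
  make it locally bounded, hence continuous (Bernstein-Doetsch), and continuous midpoint convex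
  functions are convex.

  The L_p- norm is the gauge of \<integral>|u|^p-, so f is the sum of the gauges of F and of \<integral>|u|^p-.
  As each of these is dominated by G, f/2 \<le> g. Conversely, convexity and vanishing at 0 give
  G(u/(A+B)) \<le> A/(A+B) + B/(A+B) = 1 whenever F(u/A) \<le> 1 and \<integral>|u/B|^p- \<le> 1, so g \<le> f,
  which is sharper than the stated bound since \<beta>^(1/p-) \<ge> 1.
*)
theory Submission
  imports Defs
begin

section \<open>Midpoint convex functions\<close>

definition midpoint_convex_on :: "real set \<Rightarrow> (real \<Rightarrow> real) \<Rightarrow> bool" where
  "midpoint_convex_on S f \<longleftrightarrow> (\<forall>s\<in>S. \<forall>t\<in>S. f ((s + t) / 2) \<le> (f s + f t) / 2)"

lemma convex_on_imp_midpoint_convex_on: "convex_on S f \<Longrightarrow> midpoint_convex_on S f"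
  unfolding midpoint_convex_on_def
  using convex_onD[of S f "1/2"] by (auto simp: add_divide_distrib)

lemma midpoint_convex_on_dyadic:
  assumes mid: "midpoint_convex_on S f" and S: "convex S" and x: "x \<in> S" and xh: "x + h \<in> S"
  shows "f (x + h / 2 ^ n) \<le> f x + (f (x + h) - f x) / 2 ^ n"
proof (induction n)
  case 0
  then show ?case by simp
next
  case (Suc n)
  have "(1 - 1 / 2 ^ n) *\<^sub>R x + (1 / 2 ^ n) *\<^sub>R (x + h) \<in> S"
    by (rule convexD[OF S x xh]) auto
  moreover have "(1 - 1 / 2 ^ n) *\<^sub>R x + (1 / 2 ^ n) *\<^sub>R (x + h) = x + h / 2 ^ n"
    by (simp add: field_simps)
  ultimately have xn: "x + h / 2 ^ n \<in> S" by simp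
  have eq: "x + h / 2 ^ Suc n = (x + (x + h / 2 ^ n)) / 2" by (simp add: field_simps)
  have "f (x + h / 2 ^ Suc n) \<le> (f x + f (x + h / 2 ^ n)) / 2"
    using mid x xn unfolding midpoint_convex_on_def eq by blast
  also have "\<dots> \<le> f x + (f (x + h) - f x) / 2 ^ Suc n"
    using Suc.IH by (simp add: field_simps)
  finally show ?case .
qed

lemma midpoint_convex_on_isCont:
  assumes mid: "midpoint_convex_on S f" and S: "convex S"
    and r: "0 < r" and ball: "ball x r \<subseteq> S" and bound: "\<And>y. y \<in> ball x r \<Longrightarrow> f y \<le> M"
  shows "isCont f x"
  unfolding continuous_at_eps_delta
proof (intro allI impI)
  fix \<epsilon> :: real assume \<epsilon>: "\<epsilon> > 0"
  have x: "x \<in> S" using ball r by auto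
  have Mx: "f x \<le> M" using bound r by simp
  obtain n :: nat where n: "(M - f x + 1) / \<epsilon> < 2 ^ n"
    using real_arch_pow[of 2 "(M - f x + 1) / \<epsilon>"] by auto
  define D where "D = (M - f x) / 2 ^ n"
  have D: "D < \<epsilon>" using n \<epsilon> by (simp add: D_def field_simps)
  have upper: "f (x + h / 2 ^ n) \<le> f x + D" if h: "\<bar>h\<bar> < r" for h
  proof -
    have xh: "x + h \<in> ball x r" using h by (simp add: dist_norm)
    have "f (x + h / 2 ^ n) \<le> f x + (f (x + h) - f x) / 2 ^ n"
      using midpoint_convex_on_dyadic[OF mid S x] xh ball by blast
    also have "\<dots> \<le> f x + D"
      unfolding D_def using bound[OF xh] by (simp add: divide_right_mono)
    finally show ?thesis .
  qed
  show "\<exists>d>0. \<forall>y. dist y x < d \<longrightarrow> dist (f y) (f x) < \<epsilon>"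
  proof (intro exI[of _ "r / 2 ^ n"] conjI allI impI)
    show "0 < r / 2 ^ n" using r by simp
    fix y assume "dist y x < r / 2 ^ n"
    then have h: "\<bar>2 ^ n * (y - x)\<bar> < r"
      by (simp add: dist_real_def abs_mult pos_less_divide_eq mult.commute)
    have above: "f y \<le> f x + D" using upper[OF h] by simp
    have mirror: "f (2 * x - y) \<le> f x + D" using upper[of "- (2 ^ n * (y - x))"] h by simp
    have "1 * \<bar>y - x\<bar> \<le> 2 ^ n * \<bar>y - x\<bar>" by (intro mult_right_mono) auto
    then have "\<bar>y - x\<bar> < r" using h by (simp add: abs_mult)
    then have "y \<in> S" "2 * x - y \<in> S"
      using ball by (auto simp: subset_iff dist_real_def abs_minus_commute)
    then have "f x \<le> (f y + f (2 * x - y)) / 2"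
      using mid by (force simp: midpoint_convex_on_def)
    then show "dist (f y) (f x) < \<epsilon>"
      using above mirror D by (auto simp: dist_real_def abs_less_iff)
  qed
qed

lemma continuous_midpoint_convex_le_0:
  assumes cont: "continuous_on {a..b} g" and mid: "midpoint_convex_on {a<..<b} g"
    and ga: "g a \<le> 0" and gb: "g b \<le> 0" and x: "x \<in> {a..b}"
  shows "g x \<le> 0"
proof (rule ccontr)
  assume gx: "\<not> g x \<le> 0"
  obtain t1 where t1: "t1 \<in> {a..b}" "\<And>y. y \<in> {a..b} \<Longrightarrow> g y \<le> g t1"
    using continuous_attains_sup[OF compact_Icc _ cont] x by fastforce
  define m where "m = g t1"
  have m: "m > 0" using t1(2)[OF x] gx by (simp add: m_def)
  txt \<open>The leftmost maximiser t0 of g is the midpoint of t0 - h and t0 + h, where g is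
    strictly smaller on the left and not larger on the right.\<close>
  define T where "T = {t \<in> {a..b}. g t = m}"
  have "closed T" unfolding T_def by (rule continuous_closed_preimage_constant[OF cont closed_atLeastAtMost])
  moreover have "T \<noteq> {}" using t1 by (auto simp: T_def m_def)
  moreover have bdd: "bdd_below T" by (rule bdd_belowI[of _ a]) (auto simp: T_def)
  ultimately have "Inf T \<in> T" by (intro closed_contains_Inf)
  define t0 where "t0 = Inf T"
  have t0: "t0 \<in> {a..b}" "g t0 = m" using \<open>Inf T \<in> T\<close> by (auto simp: T_def t0_def)
  then have "a < t0" "t0 < b" using ga gb m by (auto simp: order.order_iff_strict)
  define h where "h = min (t0 - a) (b - t0) / 2"
  have h: "h > 0" "a < t0 - h" "t0 + h < b"
    using \<open>a < t0\<close> \<open>t0 < b\<close> by (auto simp: h_def min_def field_simps)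
  have "g (t0 - h) \<noteq> m"
  proof
    assume "g (t0 - h) = m"
    then have "t0 - h \<in> T" using h \<open>t0 < b\<close> by (auto simp: T_def)
    then have "t0 \<le> t0 - h" unfolding t0_def by (rule cInf_lower[OF _ bdd])
    then show False using h by simp
  qed
  moreover have "g (t0 - h) \<le> m" "g (t0 + h) \<le> m"
    using t1(2)[of "t0 - h"] t1(2)[of "t0 + h"] h \<open>a < t0\<close> \<open>t0 < b\<close> by (auto simp: m_def)
  moreover have "t0 - h \<in> {a<..<b}" "t0 + h \<in> {a<..<b}" using h \<open>a < t0\<close> \<open>t0 < b\<close> by auto
  then have "g ((t0 - h + (t0 + h)) / 2) \<le> (g (t0 - h) + g (t0 + h)) / 2"
    using mid unfolding midpoint_convex_on_def by blast
  ultimately show False using t0 by simp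
qed

lemma midpoint_convex_on_imp_convex_on:
  assumes S: "convex S" and cont: "continuous_on S f" and mid: "midpoint_convex_on (interior S) f"
  shows "convex_on S f"
proof (rule convex_on_linorderI)
  fix t x y :: real
  assume t: "0 < t" "t < 1" and xy: "x \<in> S" "y \<in> S" "x < y"
  have Icc: "{x..y} \<subseteq> S" by (rule connected_contains_Icc[OF convex_connected[OF S] xy(1,2)])
  then have "{x<..<y} \<subseteq> interior S" using interior_mono[OF Icc] by simp
  define k where "k = (f y - f x) / (y - x)"
  define g where "g z = f z - (f x + k * (z - x))" for z
  have "continuous_on {x..y} g"
    unfolding g_def by (intro continuous_intros continuous_on_subset[OF cont Icc])
  moreover have "midpoint_convex_on {x<..<y} g"
    unfolding midpoint_convex_on_def
  proof (intro ballI)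
    fix s u assume "s \<in> {x<..<y}" "u \<in> {x<..<y}"
    then have "f ((s + u) / 2) \<le> (f s + f u) / 2"
      using mid \<open>{x<..<y} \<subseteq> interior S\<close> unfolding midpoint_convex_on_def by blast
    moreover have "k * ((s + u) / 2 - x) = (k * (s - x) + k * (u - x)) / 2"
      by (simp add: field_simps)
    ultimately show "g ((s + u) / 2) \<le> (g s + g u) / 2" unfolding g_def by (simp add: field_simps)
  qed
  moreover have "g x \<le> 0" "g y \<le> 0" using xy by (auto simp: g_def k_def)
  moreover have "(1 - t) * x + t * y \<in> {x..y}"
  proof -
    have "0 \<le> t * (y - x)" "t * (y - x) \<le> y - x" using t xy by (auto intro: mult_left_le_one_le)
    moreover have "(1 - t) * x + t * y = x + t * (y - x)" by (simp add: algebra_simps)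
    ultimately show ?thesis by simp
  qed
  ultimately have "g ((1 - t) * x + t * y) \<le> 0" by (rule continuous_midpoint_convex_le_0)
  moreover have "k * ((1 - t) * x + t * y - x) = t * (f y - f x)"
    using xy by (simp add: k_def field_simps)
  ultimately show "f ((1 - t) *\<^sub>R x + t *\<^sub>R y) \<le> (1 - t) * f x + t * f y"
    unfolding g_def by (simp add: algebra_simps)
qed (rule S)

lemma continuous_on_powr_nonneg: "0 < q \<Longrightarrow> continuous_on {0..} (\<lambda>t::real. t powr q)"
  by (intro continuous_on_powr' continuous_intros) auto

lemma convex_on_powr_nonneg:
  assumes "1 \<le> p"
  shows "convex_on {0..} (\<lambda>t::real. t powr p)"
proof (rule midpoint_convex_on_imp_convex_on)
  show "continuous_on {0..} (\<lambda>t::real. t powr p)" using assms by (intro continuous_on_powr_nonneg) simp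
  show "midpoint_convex_on (interior {0..}) (\<lambda>t::real. t powr p)"
    using convex_on_imp_midpoint_convex_on[OF powr_convex[OF assms]] by (simp add: interior_Ici[of "-1"])
qed (simp add: convex_real_interval)

lemma convex_on_if_almost_monotone_ratios:
  fixes f :: "real \<Rightarrow> real"
  assumes f0: "f 0 = 0" and pos: "\<And>t. t > 0 \<Longrightarrow> f t > 0"
    and mid: "midpoint_convex_on {0<..} f"
    and incr: "almost_incr_on {0<..} \<beta> (\<lambda>t. f t / t powr pm)"
    and decr: "almost_decr_on {0<..} \<beta> (\<lambda>t. f t / t powr pp)"
    and p: "0 < pm" "pm \<le> pp"
  shows "convex_on {0..} f"
proof (rule midpoint_convex_on_imp_convex_on)
  define K where "K = \<beta> * f 1"
  define g where "g t = K * (t powr pm + t powr pp)" for t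
  have "f 1 \<le> K" using incr[unfolded almost_incr_on_def, rule_format, of 1 1] by (simp add: K_def)
  then have K: "K > 0" using pos[of 1] by simp
  have bound: "f t \<le> g t" if "t > 0" for t
  proof (cases "t \<le> 1")
    case True
    then have "f t / t powr pm \<le> K"
      using incr[unfolded almost_incr_on_def, rule_format, of t 1] that by (simp add: K_def)
    then have "f t \<le> K * t powr pm" using that by (simp add: divide_le_eq mult_ac)
    then show ?thesis using K by (simp add: g_def distrib_left add_increasing2)
  next
    case False
    then have "f t / t powr pp \<le> K"
      using decr[unfolded almost_decr_on_def, rule_format, of 1 t] that by (simp add: K_def)
    then have "f t \<le> K * t powr pp" using that by (simp add: divide_le_eq mult_ac)
    then show ?thesis using K by (simp add: g_def distrib_left add_increasing)
  qed
  have g_cont: "continuous_on {0..} g"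
    unfolding g_def using p by (intro continuous_intros continuous_on_powr_nonneg) auto
  have "continuous (at x within {0..}) f" if x: "x \<in> {0..}" for x
  proof (cases "x = 0")
    case True
    have "eventually (\<lambda>t. 0 \<le> f t \<and> f t \<le> g t) (at 0 within {0..})"
      unfolding eventually_at_filter
      using pos bound by (intro always_eventually) (auto simp: less_imp_le)
    moreover have "(g \<longlongrightarrow> g 0) (at 0 within {0..})"
      using g_cont by (simp add: continuous_on_def)
    moreover have "g 0 = 0" using p by (simp add: g_def)
    ultimately have "(f \<longlongrightarrow> 0) (at 0 within {0..})"
      by (intro tendsto_sandwich[of "\<lambda>_. 0" f _ g]) (auto elim: eventually_mono)
    then show ?thesis using True f0 by (simp add: continuous_within)
  next
    case False
    then have "x > 0" using x by simp
    have ball: "ball x (x / 2) \<subseteq> {0<..}" unfolding subset_iff mem_ball dist_real_def greaterThan_iff by arith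
    have bound_ball: "f y \<le> g (2 * x)" if y: "y \<in> ball x (x / 2)" for y
    proof -
      have "0 < y" "y \<le> 2 * x" using y unfolding mem_ball dist_real_def by arith+
      have "f y \<le> K * (y powr pm + y powr pp)" using bound[OF \<open>0 < y\<close>] by (simp add: g_def)
      also have "\<dots> \<le> K * ((2 * x) powr pm + (2 * x) powr pp)"
        using p K \<open>0 < y\<close> \<open>y \<le> 2 * x\<close> by (intro mult_left_mono add_mono powr_mono2) auto
      finally show "f y \<le> g (2 * x)" by (simp add: g_def)
    qed
    have "isCont f x"
      by (rule midpoint_convex_on_isCont[OF mid _ _ ball bound_ball]) (use \<open>x > 0\<close> in auto)
    then show ?thesis by (rule continuous_at_imp_continuous_at_within)
  qed
  then show "continuous_on {0..} f" by (simp add: continuous_on_eq_continuous_within)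
  show "midpoint_convex_on (interior {0..}) f" using mid by (simp add: interior_Ici[of "-1"])
qed (simp add: convex_real_interval)

lemma convex_on_nonneg_mono:
  fixes f :: "real \<Rightarrow> real"
  assumes cv: "convex_on {0..} f" and f0: "f 0 = 0" and nonneg: "\<And>t. 0 \<le> t \<Longrightarrow> 0 \<le> f t"
    and st: "0 \<le> s" "s \<le> t"
  shows "f s \<le> f t"
proof (cases "t = 0")
  case True
  then show ?thesis using st by simp
next
  case False
  then have t: "t > 0" using st by simp
  have "f ((1 - s / t) *\<^sub>R 0 + (s / t) *\<^sub>R t) \<le> (1 - s / t) * f 0 + (s / t) * f t"
    using st t by (intro convex_onD[OF cv]) auto
  then have "f s \<le> (s / t) * f t" using t f0 by simp
  also have "\<dots> \<le> f t" using st t nonneg[of t] by (intro mult_left_le_one_le) auto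
  finally show ?thesis .
qed

lemma convex_on_nonneg_norm_combination:
  fixes f :: "real \<Rightarrow> real" and U V :: complex
  assumes cv: "convex_on {0..} f" and f0: "f 0 = 0" and nonneg: "\<And>t. 0 \<le> t \<Longrightarrow> 0 \<le> f t"
    and \<theta>: "0 \<le> \<theta>" "\<theta> \<le> 1"
  shows "f (cmod (of_real \<theta> * U + of_real (1 - \<theta>) * V)) \<le> \<theta> * f (cmod U) + (1 - \<theta>) * f (cmod V)"
proof -
  have "cmod (of_real \<theta> * U + of_real (1 - \<theta>) * V) \<le> \<theta> * cmod U + (1 - \<theta>) * cmod V"
    using norm_triangle_ineq[of "of_real \<theta> * U" "of_real (1 - \<theta>) * V"] \<theta> by (simp add: norm_mult del: of_real_diff)
  then have "f (cmod (of_real \<theta> * U + of_real (1 - \<theta>) * V)) \<le> f (\<theta> * cmod U + (1 - \<theta>) * cmod V)"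
    by (intro convex_on_nonneg_mono[OF cv f0 nonneg]) auto
  also have "\<dots> \<le> \<theta> * f (cmod U) + (1 - \<theta>) * f (cmod V)"
    using convex_onD[OF cv, of "1 - \<theta>" "cmod U" "cmod V"] \<theta> by (simp add: algebra_simps)
  finally show ?thesis .
qed

lemma AE_convex_on_if_uniformly_midpoint_convex:
  fixes f :: "'b \<Rightarrow> real \<Rightarrow> real"
  assumes unif: "\<And>\<epsilon>. \<epsilon> > 0 \<Longrightarrow> \<exists>\<delta>. 0 < \<delta> \<and> \<delta> < 1 \<and>
       (AE z in M. \<forall>s t. s > 0 \<and> t > 0 \<and> \<bar>s - t\<bar> \<ge> \<epsilon> * max s t \<longrightarrow>
          f z ((s + t) / 2) \<le> (1 - \<delta>) * ((f z s + f z t) / 2))"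
    and ratios: "AE z in M. almost_incr_on {0<..} \<beta> (\<lambda>t. f z t / t powr pm) \<and>
       almost_decr_on {0<..} \<beta> (\<lambda>t. f z t / t powr pp)"
    and pos: "AE z in M. f z 0 = 0 \<and> (\<forall>t>0. f z t > 0)"
    and p: "0 < pm" "pm \<le> pp"
  shows "AE z in M. convex_on {0..} (f z) \<and> f z 0 = 0 \<and> (\<forall>t\<ge>0. 0 \<le> f z t)"
proof -
  txt \<open>Countably many separation ratios 1 / Suc n suffice, so the exceptional null sets can be merged.\<close>
  have "AE z in M. \<forall>n::nat. \<exists>\<delta>. 0 < \<delta> \<and> \<delta> < 1 \<and> (\<forall>s t. s > 0 \<and> t > 0 \<and>
      \<bar>s - t\<bar> \<ge> 1 / Suc n * max s t \<longrightarrow> f z ((s + t) / 2) \<le> (1 - \<delta>) * ((f z s + f z t) / 2))"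
  proof (subst AE_all_countable, intro allI)
    fix n :: nat
    obtain \<delta> where "0 < \<delta>" "\<delta> < 1" and "AE z in M. \<forall>s t. s > 0 \<and> t > 0 \<and>
        \<bar>s - t\<bar> \<ge> 1 / Suc n * max s t \<longrightarrow> f z ((s + t) / 2) \<le> (1 - \<delta>) * ((f z s + f z t) / 2)"
      using unif[of "1 / Suc n"] by auto
    then show "AE z in M. \<exists>\<delta>. 0 < \<delta> \<and> \<delta> < 1 \<and> (\<forall>s t. s > 0 \<and> t > 0 \<and>
        \<bar>s - t\<bar> \<ge> 1 / Suc n * max s t \<longrightarrow> f z ((s + t) / 2) \<le> (1 - \<delta>) * ((f z s + f z t) / 2))"
      by (auto elim: eventually_mono)
  qed
  with ratios pos show ?thesis
  proof eventually_elim
    case (elim z)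
    have "midpoint_convex_on {0<..} (f z)"
      unfolding midpoint_convex_on_def
    proof (intro ballI)
      fix s t :: real assume "s \<in> {0<..}" "t \<in> {0<..}"
      then have st: "0 < s" "0 < t" by auto
      show "f z ((s + t) / 2) \<le> (f z s + f z t) / 2"
      proof (cases "s = t")
        case False
        then have "0 < \<bar>s - t\<bar> / max s t" using st by simp
        then obtain n :: nat where "inverse (Suc n) < \<bar>s - t\<bar> / max s t"
          using reals_Archimedean by blast
        then have "\<bar>s - t\<bar> \<ge> 1 / Suc n * max s t"
          using st by (simp add: inverse_eq_divide pos_less_divide_eq less_imp_le mult.commute)
        then obtain \<delta> where "0 < \<delta>" "\<delta> < 1" and
          less: "f z ((s + t) / 2) \<le> (1 - \<delta>) * ((f z s + f z t) / 2)"
          using elim(3) st by blast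
        moreover have "0 < f z s" "0 < f z t" using elim(2) st by auto
        ultimately have "(1 - \<delta>) * ((f z s + f z t) / 2) \<le> (f z s + f z t) / 2"
          by (intro mult_left_le_one_le) auto
        with less show ?thesis by linarith
      qed simp
    qed
    then have "convex_on {0..} (f z)"
      using elim(1,2) p by (intro convex_on_if_almost_monotone_ratios[where \<beta> = \<beta>]) auto
    then show ?case using elim(2) by (auto simp: le_less)
  qed
qed

section \<open>Luxemburg gauges of convex modulars\<close>

lemma gauge_le: "0 < l \<Longrightarrow> H (\<lambda>x. u x / of_real l) \<le> 1 \<Longrightarrow> gauge H u \<le> ennreal l"
  unfolding gauge_def by (rule Inf_lower) auto

lemma le_gauge: "(\<And>l. 0 < l \<Longrightarrow> H (\<lambda>x. u x / of_real l) \<le> 1 \<Longrightarrow> y \<le> ennreal l) \<Longrightarrow> y \<le> gauge H u"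
  unfolding gauge_def by (rule Inf_greatest) auto

lemma gauge_eq_0I: "(\<And>l. 0 < l \<Longrightarrow> H (\<lambda>x. u x / of_real l) \<le> 1) \<Longrightarrow> gauge H u = 0"
  by (metis ennreal_le_epsilon add_0 gauge_le le_zero_eq)

lemma gauge_mono: "(\<And>w. H w \<le> H' w) \<Longrightarrow> gauge H u \<le> gauge H' u"
  unfolding gauge_def by (rule Inf_superset_mono) (auto intro: order_trans)

lemma gauge_lessE:
  assumes "gauge H u < ennreal y"
  obtains l where "0 < l" "l < y" "H (\<lambda>x. u x / of_real l) \<le> 1"
proof -
  obtain z where "z \<in> {ennreal l | l. l > 0 \<and> H (\<lambda>x. u x / of_real l) \<le> 1}" "z < ennreal y"
    using assms unfolding gauge_def by (auto simp: Inf_less_iff)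
  then show ?thesis using that by (auto simp: ennreal_less_iff)
qed

locale convex_modular =
  fixes P :: "('a \<Rightarrow> complex) \<Rightarrow> bool" and H :: "('a \<Rightarrow> complex) \<Rightarrow> ennreal"
  assumes P_zero: "P (\<lambda>_. 0)"
    and P_cmult: "\<And>w c. P w \<Longrightarrow> P (\<lambda>x. c * w x)"
    and H_zero: "H (\<lambda>_. 0) = 0"
    and H_rotation: "\<And>w \<omega>. cmod \<omega> = 1 \<Longrightarrow> H (\<lambda>x. \<omega> * w x) = H w"
    and H_convex: "\<And>U V \<theta>. P U \<Longrightarrow> P V \<Longrightarrow> 0 \<le> \<theta> \<Longrightarrow> \<theta> \<le> 1 \<Longrightarrow>
       H (\<lambda>x. of_real \<theta> * U x + of_real (1 - \<theta>) * V x) \<le> ennreal \<theta> * H U + ennreal (1 - \<theta>) * H V"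
begin

lemma P_div: "P w \<Longrightarrow> P (\<lambda>x. w x / c)"
  using P_cmult[of w "inverse c"] by (simp add: divide_inverse mult.commute)

lemma H_scale_le:
  assumes "P w" "0 \<le> \<theta>" "\<theta> \<le> 1"
  shows "H (\<lambda>x. of_real \<theta> * w x) \<le> ennreal \<theta> * H w"
  using H_convex[OF assms(1) P_zero assms(2,3)] by (simp add: H_zero)

lemma H_div_sum_le:
  assumes u: "P u" and A: "0 < A" and B: "0 < B" and "H (\<lambda>x. u x / of_real A) \<le> 1"
  shows "H (\<lambda>x. u x / of_real (A + B)) \<le> ennreal (A / (A + B))"
proof -
  have "(\<lambda>x. u x / of_real (A + B)) = (\<lambda>x. of_real (A / (A + B)) * (u x / of_real A))"
    using A B by (auto simp: field_simps simp flip: of_real_add)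
  then have "H (\<lambda>x. u x / of_real (A + B)) \<le> ennreal (A / (A + B)) * H (\<lambda>x. u x / of_real A)"
    using A B by (simp only:) (intro H_scale_le P_div u, auto)
  also have "\<dots> \<le> ennreal (A / (A + B))"
    using assms(4) mult_left_mono[of _ 1 "ennreal (A / (A + B))"] by simp
  finally show ?thesis .
qed

lemma gauge_zero: "gauge H (\<lambda>_. 0) = 0"
  by (rule gauge_eq_0I) (simp add: H_zero)

lemma gauge_cmult_ge:
  assumes "c \<noteq> 0"
  shows "ennreal (cmod c) * gauge H u \<le> gauge H (\<lambda>x. c * u x)"
proof (rule le_gauge)
  fix l :: real assume l: "0 < l" "H (\<lambda>x. c * u x / of_real l) \<le> 1"
  define \<omega> where "\<omega> = of_real (cmod c) / c"
  have eq: "(\<lambda>x. u x / of_real (l / cmod c)) = (\<lambda>x. \<omega> * (c * u x / of_real l))"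
    using assms l by (auto simp: \<omega>_def field_simps)
  have "cmod \<omega> = 1" using assms by (simp add: \<omega>_def norm_divide)
  then have "H (\<lambda>x. u x / of_real (l / cmod c)) = H (\<lambda>x. c * u x / of_real l)"
    unfolding eq by (rule H_rotation)
  with l have "H (\<lambda>x. u x / of_real (l / cmod c)) \<le> 1" by simp
  then have "gauge H u \<le> ennreal (l / cmod c)" using assms l by (intro gauge_le) auto
  then have "ennreal (cmod c) * gauge H u \<le> ennreal (cmod c) * ennreal (l / cmod c)"
    by (rule mult_left_mono) simp
  also have "\<dots> = ennreal (cmod c * (l / cmod c))" by (rule ennreal_mult[symmetric]) (use l in auto)
  also have "\<dots> = ennreal l" using assms by simp
  finally show "ennreal (cmod c) * gauge H u \<le> ennreal l" .
qed

lemma gauge_cmult: "gauge H (\<lambda>x. c * u x) = ennreal (cmod c) * gauge H u"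
proof (cases "c = 0")
  case True
  then show ?thesis by (simp add: gauge_zero)
next
  case False
  have "ennreal (cmod c) * (ennreal (cmod (1 / c)) * gauge H (\<lambda>x. c * u x))
      \<le> ennreal (cmod c) * gauge H (\<lambda>x. 1 / c * (c * u x))"
    using False by (intro mult_left_mono gauge_cmult_ge) auto
  moreover have "ennreal (cmod c) * (ennreal (cmod (1 / c)) * gauge H (\<lambda>x. c * u x)) = gauge H (\<lambda>x. c * u x)"
    using False by (simp add: mult.assoc[symmetric] norm_divide flip: ennreal_mult)
  ultimately have "gauge H (\<lambda>x. c * u x) \<le> ennreal (cmod c) * gauge H u" using False by simp
  then show ?thesis using gauge_cmult_ge[OF False] by (rule antisym)
qed

lemma gauge_triangle:
  assumes u: "P u" and v: "P v"
  shows "gauge H (\<lambda>x. u x + v x) \<le> gauge H u + gauge H v"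
proof (rule ennreal_le_epsilon)
  fix e :: real assume fin: "gauge H u + gauge H v < top" and e: "0 < e"
  obtain gu gv where gu: "gauge H u = ennreal gu" "0 \<le> gu" and gv: "gauge H v = ennreal gv" "0 \<le> gv"
    using fin by (cases "gauge H u" rule: ennreal_cases; cases "gauge H v" rule: ennreal_cases) auto
  obtain l where l: "0 < l" "l < gu + e / 2" "H (\<lambda>x. u x / of_real l) \<le> 1"
    using gu e by (auto intro: gauge_lessE[of H u "gu + e / 2"] simp: ennreal_less_iff)
  obtain m where m: "0 < m" "m < gv + e / 2" "H (\<lambda>x. v x / of_real m) \<le> 1"
    using gv e by (auto intro: gauge_lessE[of H v "gv + e / 2"] simp: ennreal_less_iff)
  define \<theta> where "\<theta> = l / (l + m)"
  have \<theta>: "0 \<le> \<theta>" "\<theta> \<le> 1" "1 - \<theta> = m / (l + m)" using l m by (auto simp: \<theta>_def field_simps)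
  have "(\<lambda>x. (u x + v x) / of_real (l + m))
      = (\<lambda>x. of_real \<theta> * (u x / of_real l) + of_real (1 - \<theta>) * (v x / of_real m))"
    using l m unfolding \<theta>(3) by (auto simp: \<theta>_def field_simps simp flip: of_real_add)
  then have "H (\<lambda>x. (u x + v x) / of_real (l + m))
      \<le> ennreal \<theta> * H (\<lambda>x. u x / of_real l) + ennreal (1 - \<theta>) * H (\<lambda>x. v x / of_real m)"
    using H_convex[OF P_div[OF u] P_div[OF v] \<theta>(1,2)] by simp
  also have "\<dots> \<le> ennreal \<theta> * 1 + ennreal (1 - \<theta>) * 1"
    using l m by (intro add_mono mult_left_mono) auto
  also have "\<dots> = 1" using \<theta> by (simp flip: ennreal_plus)
  finally have "gauge H (\<lambda>x. u x + v x) \<le> ennreal (l + m)" using l m by (intro gauge_le) auto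
  also have "\<dots> \<le> gauge H u + gauge H v + ennreal e"
    using l m gu gv e by (simp flip: ennreal_plus add: ennreal_leI)
  finally show "gauge H (\<lambda>x. u x + v x) \<le> gauge H u + gauge H v + ennreal e" .
qed

end

lemma convex_modular_add:
  assumes "convex_modular P H1" "convex_modular P H2"
  shows "convex_modular P (\<lambda>w. H1 w + H2 w)"
proof -
  interpret H1: convex_modular P H1 by fact
  interpret H2: convex_modular P H2 by fact
  show ?thesis
  proof
    fix U V \<theta> assume UV: "P U" "P V" "0 \<le> (\<theta>::real)" "\<theta> \<le> 1"
    let ?W = "\<lambda>x. of_real \<theta> * U x + of_real (1 - \<theta>) * V x"
    have "H1 ?W + H2 ?W \<le> (ennreal \<theta> * H1 U + ennreal (1 - \<theta>) * H1 V) + (ennreal \<theta> * H2 U + ennreal (1 - \<theta>) * H2 V)"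
      using UV by (intro add_mono H1.H_convex H2.H_convex)
    also have "\<dots> = ennreal \<theta> * (H1 U + H2 U) + ennreal (1 - \<theta>) * (H1 V + H2 V)"
      by (simp add: distrib_left add_ac)
    finally show "H1 ?W + H2 ?W \<le> ennreal \<theta> * (H1 U + H2 U) + ennreal (1 - \<theta>) * (H1 V + H2 V)" .
  qed (auto simp: H1.P_zero H1.P_cmult H1.H_zero H2.H_zero H1.H_rotation H2.H_rotation)
qed

lemma convex_modular_restrict:
  assumes "convex_modular P H" and "Q (\<lambda>_. 0)" and "\<And>w c. Q w \<Longrightarrow> Q (\<lambda>x. c * w x)"
    and "\<And>w. Q w \<Longrightarrow> P w"
  shows "convex_modular Q H"
proof -
  interpret convex_modular P H by fact
  show ?thesis
  proof
    show "Q (\<lambda>_. 0)" by fact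
    show "Q (\<lambda>x. c * w x)" if "Q w" for w c using that assms(3) by blast
    show "H (\<lambda>_. 0) = 0" by (rule H_zero)
    show "H (\<lambda>x. \<omega> * w x) = H w" if "cmod \<omega> = 1" for w \<omega> using that by (rule H_rotation)
    show "H (\<lambda>x. of_real \<theta> * U x + of_real (1 - \<theta>) * V x) \<le> ennreal \<theta> * H U + ennreal (1 - \<theta>) * H V"
      if "Q U" "Q V" "0 \<le> \<theta>" "\<theta> \<le> 1" for U V \<theta>
      using that assms(4) by (intro H_convex) auto
  qed
qed

text \<open>If H1 (u / A) \<le> 1 and H2 (u / B) \<le> 1, then u / (A + B) is both the multiple A / (A + B)
  of u / A and the multiple B / (A + B) of u / B, so the two modulars contribute at most 1 in total.\<close>
lemma gauge_add_le:
  assumes H1: "convex_modular P H1" and H2: "convex_modular P H2" and u: "P u"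
  shows "gauge (\<lambda>w. H1 w + H2 w) u \<le> gauge H1 u + gauge H2 u"
proof (rule ennreal_le_epsilon)
  interpret H1: convex_modular P H1 by fact
  interpret H2: convex_modular P H2 by fact
  fix e :: real assume fin: "gauge H1 u + gauge H2 u < top" and e: "0 < e"
  obtain g1 g2 where g1: "gauge H1 u = ennreal g1" "0 \<le> g1" and g2: "gauge H2 u = ennreal g2" "0 \<le> g2"
    using fin by (cases "gauge H1 u" rule: ennreal_cases; cases "gauge H2 u" rule: ennreal_cases) auto
  obtain A where A: "0 < A" "A < g1 + e / 2" "H1 (\<lambda>x. u x / of_real A) \<le> 1"
    using g1 e by (auto intro: gauge_lessE[of H1 u "g1 + e / 2"] simp: ennreal_less_iff)
  obtain B where B: "0 < B" "B < g2 + e / 2" "H2 (\<lambda>x. u x / of_real B) \<le> 1"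
    using g2 e by (auto intro: gauge_lessE[of H2 u "g2 + e / 2"] simp: ennreal_less_iff)
  have "H1 (\<lambda>x. u x / of_real (A + B)) \<le> ennreal (A / (A + B))"
    using A B by (intro H1.H_div_sum_le u)
  moreover have "H2 (\<lambda>x. u x / of_real (A + B)) \<le> ennreal (B / (A + B))"
    using H2.H_div_sum_le[OF u B(1) A(1) B(3)] by (simp add: add.commute)
  ultimately have "H1 (\<lambda>x. u x / of_real (A + B)) + H2 (\<lambda>x. u x / of_real (A + B))
      \<le> ennreal (A / (A + B)) + ennreal (B / (A + B))"
    by (rule add_mono)
  also have "\<dots> = ennreal (A / (A + B) + B / (A + B))" by (rule ennreal_plus[symmetric]) (use A B in auto)
  also have "\<dots> = 1" using A B by (simp add: add_divide_distrib[symmetric])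
  finally have "H1 (\<lambda>x. u x / of_real (A + B)) + H2 (\<lambda>x. u x / of_real (A + B)) \<le> 1" .
  then have "gauge (\<lambda>w. H1 w + H2 w) u \<le> ennreal (A + B)" using A B by (intro gauge_le) auto
  also have "\<dots> \<le> gauge H1 u + gauge H2 u + ennreal e"
    using A B g1 g2 e by (simp flip: ennreal_plus add: ennreal_leI)
  finally show "gauge (\<lambda>w. H1 w + H2 w) u \<le> gauge H1 u + gauge H2 u + ennreal e" .
qed

section \<open>The Lebesgue modular\<close>

lemma modp_cmult:
  assumes "u \<in> borel_measurable (lebesgue_on S)"
  shows "modp p S (\<lambda>x. c * u x) = ennreal (cmod c powr p) * modp p S u"
proof -
  have "modp p S (\<lambda>x. c * u x) = (\<integral>\<^sup>+ x. ennreal (cmod c powr p) * ennreal (cmod (u x) powr p) \<partial>lebesgue_on S)"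
    unfolding modp_def by (rule nn_integral_cong) (simp add: norm_mult powr_mult ennreal_mult)
  also have "\<dots> = ennreal (cmod c powr p) * modp p S u"
    unfolding modp_def using assms by (intro nn_integral_cmult) measurable
  finally show ?thesis .
qed

lemma modp_rotation: "cmod \<omega> = 1 \<Longrightarrow> modp p S (\<lambda>x. \<omega> * u x) = modp p S u"
  by (simp add: modp_def norm_mult)

lemma modp_convex:
  assumes U: "U \<in> borel_measurable (lebesgue_on S)" and V: "V \<in> borel_measurable (lebesgue_on S)"
    and p: "1 \<le> p" and \<theta>: "0 \<le> \<theta>" "\<theta> \<le> 1"
  shows "modp p S (\<lambda>x. of_real \<theta> * U x + of_real (1 - \<theta>) * V x)
      \<le> ennreal \<theta> * modp p S U + ennreal (1 - \<theta>) * modp p S V"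
proof -
  have "modp p S (\<lambda>x. of_real \<theta> * U x + of_real (1 - \<theta>) * V x)
      \<le> (\<integral>\<^sup>+ x. ennreal \<theta> * ennreal (cmod (U x) powr p) + ennreal (1 - \<theta>) * ennreal (cmod (V x) powr p)
          \<partial>lebesgue_on S)"
    unfolding modp_def
  proof (intro nn_integral_mono)
    fix x
    have "cmod (of_real \<theta> * U x + of_real (1 - \<theta>) * V x) powr p
        \<le> \<theta> * cmod (U x) powr p + (1 - \<theta>) * cmod (V x) powr p"
      using p \<theta> by (intro convex_on_nonneg_norm_combination convex_on_powr_nonneg) auto
    then show "ennreal (cmod (of_real \<theta> * U x + of_real (1 - \<theta>) * V x) powr p)
        \<le> ennreal \<theta> * ennreal (cmod (U x) powr p) + ennreal (1 - \<theta>) * ennreal (cmod (V x) powr p)"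
      using \<theta> by (simp add: ennreal_leI flip: ennreal_mult ennreal_plus)
  qed
  also have "\<dots> = ennreal \<theta> * modp p S U + ennreal (1 - \<theta>) * modp p S V"
    unfolding modp_def using U V by (simp add: nn_integral_add nn_integral_cmult)
  finally show ?thesis .
qed

lemma convex_modular_modp:
  assumes "1 \<le> p"
  shows "convex_modular (\<lambda>u. u \<in> borel_measurable (lebesgue_on S)) (modp p S)"
proof
  show "modp p S (\<lambda>_. 0) = 0" by (simp add: modp_def)
  show "modp p S (\<lambda>x. \<omega> * w x) = modp p S w" if "cmod \<omega> = 1" for w \<omega>
    using that by (rule modp_rotation)
qed (use assms modp_convex in auto)

lemma modp_div_le_1_iff:
  assumes u: "u \<in> borel_measurable (lebesgue_on S)" and p: "0 < p" and l: "0 < l"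
    and m: "modp p S u = ennreal m" "0 \<le> m"
  shows "modp p S (\<lambda>x. u x / of_real l) \<le> 1 \<longleftrightarrow> m powr (1 / p) \<le> l"
proof -
  have "(\<lambda>x. u x / of_real l) = (\<lambda>x. of_real (1 / l) * u x)"
    by (simp add: divide_inverse mult.commute)
  then have "modp p S (\<lambda>x. u x / of_real l) = ennreal ((1 / l) powr p) * ennreal m"
    using modp_cmult[OF u, of p "of_real (1 / l)"] m l by (simp add: norm_divide)
  also have "\<dots> = ennreal (m / l powr p)"
    using l m by (subst ennreal_mult[symmetric]) (auto simp: powr_divide)
  finally have "modp p S (\<lambda>x. u x / of_real l) \<le> 1 \<longleftrightarrow> m \<le> l powr p"
    using l by (simp add: ennreal_le_1 divide_le_eq)
  also have "\<dots> \<longleftrightarrow> m powr (1 / p) \<le> l"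
  proof
    assume "m \<le> l powr p"
    then have "m powr (1 / p) \<le> (l powr p) powr (1 / p)" using m p by (intro powr_mono2) auto
    then show "m powr (1 / p) \<le> l" using l p by (simp add: powr_powr)
  next
    assume "m powr (1 / p) \<le> l"
    then have "(m powr (1 / p)) powr p \<le> l powr p" using p by (intro powr_mono2) auto
    then show "m \<le> l powr p" using m p by (simp add: powr_powr)
  qed
  finally show ?thesis .
qed

lemma gauge_modp:
  assumes u: "u \<in> borel_measurable (lebesgue_on S)" and p: "0 < p"
  shows "gauge (modp p S) u = Lp_norm p S u"
proof (cases "modp p S u = \<infinity>")
  case True
  have "modp p S (\<lambda>x. u x / of_real l) = \<infinity>" if "0 < l" for l
    using modp_cmult[OF u, of p "1 / of_real l"] True that
    by (simp add: divide_inverse mult.commute ennreal_mult_top)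
  then have empty: "{ennreal l | l. l > 0 \<and> modp p S (\<lambda>x. u x / of_real l) \<le> 1} = {}"
    by (auto simp: top_unique)
  have "gauge (modp p S) u = \<infinity>" unfolding gauge_def empty by simp
  then show ?thesis using True by (simp add: Lp_norm_def)
next
  case False
  then obtain m where m: "modp p S u = ennreal m" "0 \<le> m" by (cases "modp p S u" rule: ennreal_cases) auto
  have Lp: "Lp_norm p S u = ennreal (m powr (1 / p))" using m by (simp add: Lp_norm_def)
  show ?thesis
  proof (rule antisym)
    show "gauge (modp p S) u \<le> Lp_norm p S u"
    proof (rule ennreal_le_epsilon)
      fix e :: real assume "0 < e"
      then have pos: "0 < m powr (1 / p) + e" by (simp add: add_nonneg_pos)
      then have "modp p S (\<lambda>x. u x / of_real (m powr (1 / p) + e)) \<le> 1"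
        using \<open>0 < e\<close> by (subst modp_div_le_1_iff[OF u p _ m]) auto
      then have "gauge (modp p S) u \<le> ennreal (m powr (1 / p) + e)" by (rule gauge_le[OF pos])
      then show "gauge (modp p S) u \<le> Lp_norm p S u + ennreal e"
        using \<open>0 < e\<close> by (simp add: Lp ennreal_plus)
    qed
    show "Lp_norm p S u \<le> gauge (modp p S) u"
      unfolding Lp using modp_div_le_1_iff[OF u p _ m] by (intro le_gauge) (simp add: ennreal_leI)
  qed
qed

lemma modp_eq_0_iff:
  assumes "u \<in> borel_measurable (lebesgue_on S)"
  shows "modp p S u = 0 \<longleftrightarrow> (AE x in lebesgue_on S. u x = 0)"
proof -
  have "modp p S u = 0 \<longleftrightarrow> (AE x in lebesgue_on S. ennreal (cmod (u x) powr p) = 0)"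
    unfolding modp_def using assms by (intro nn_integral_0_iff_AE) measurable
  also have "\<dots> \<longleftrightarrow> (AE x in lebesgue_on S. u x = 0)"
    by (intro AE_cong) simp
  finally show ?thesis .
qed

lemma Lp_norm_eq_0_iff:
  assumes "u \<in> borel_measurable (lebesgue_on S)" and "0 < p"
  shows "Lp_norm p S u = 0 \<longleftrightarrow> (AE x in lebesgue_on S. u x = 0)"
proof -
  have "Lp_norm p S u = 0 \<longleftrightarrow> modp p S u = 0"
    using assms(2) by (cases "modp p S u" rule: ennreal_cases) (auto simp: Lp_norm_def)
  with modp_eq_0_iff[OF assms(1)] show ?thesis by simp
qed

lemma Lp_norm_less_top_iff: "Lp_norm p S u < \<infinity> \<longleftrightarrow> modp p S u < \<infinity>"
  by (simp add: Lp_norm_def top.not_eq_extremum[symmetric])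

lemma modp_add_less_top:
  assumes u: "u \<in> borel_measurable (lebesgue_on S)" and v: "v \<in> borel_measurable (lebesgue_on S)"
    and p: "1 \<le> p" and "modp p S u < \<infinity>" "modp p S v < \<infinity>"
  shows "modp p S (\<lambda>x. u x + v x) < \<infinity>"
proof -
  interpret convex_modular "\<lambda>u. u \<in> borel_measurable (lebesgue_on S)" "modp p S"
    using p by (rule convex_modular_modp)
  have "Lp_norm p S (\<lambda>x. u x + v x) \<le> Lp_norm p S u + Lp_norm p S v"
    using gauge_triangle[OF u v] u v p by (simp add: gauge_modp)
  also have "\<dots> < \<infinity>" using assms Lp_norm_less_top_iff[of p S u] Lp_norm_less_top_iff[of p S v] by simp
  finally show ?thesis using Lp_norm_less_top_iff by blast
qed

lemma loc_Lp_iff_modp: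
  "loc_Lp p \<Omega> u \<longleftrightarrow> u \<in> borel_measurable (lebesgue_on \<Omega>) \<and> (\<forall>K. compact K \<and> K \<subseteq> \<Omega> \<longrightarrow> modp p K u < \<infinity>)"
  by (simp add: loc_Lp_def modp_def)

lemma loc_Lp_measurable_on_compact:
  assumes "loc_Lp p \<Omega> u" "K \<subseteq> \<Omega>"
  shows "u \<in> borel_measurable (lebesgue_on K)"
  using assms by (auto simp: loc_Lp_def intro: measurable_restrict_mono)

lemma loc_Lp_cmult: "loc_Lp p \<Omega> u \<Longrightarrow> loc_Lp p \<Omega> (\<lambda>x. c * u x)"
  unfolding loc_Lp_iff_modp
  by (auto simp: modp_cmult loc_Lp_measurable_on_compact loc_Lp_iff_modp ennreal_mult_less_top)

lemma loc_Lp_add: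
  assumes u: "loc_Lp p \<Omega> u" and v: "loc_Lp p \<Omega> v" and p: "1 \<le> p"
  shows "loc_Lp p \<Omega> (\<lambda>x. u x + v x)"
  unfolding loc_Lp_iff_modp
proof (intro conjI allI impI)
  show "(\<lambda>x. u x + v x) \<in> borel_measurable (lebesgue_on \<Omega>)"
    using u v by (simp add: loc_Lp_def borel_measurable_add)
  fix K assume "compact K \<and> K \<subseteq> \<Omega>"
  then show "modp p K (\<lambda>x. u x + v x) < \<infinity>"
    using u v p by (intro modp_add_less_top loc_Lp_measurable_on_compact) (auto simp: loc_Lp_iff_modp)
qed

lemma loc_Lp_imp_loc_integrable:
  assumes u: "loc_Lp p \<Omega> u" and p: "1 \<le> p"
  shows "loc_integrable \<Omega> u"
  unfolding loc_integrable_def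
proof (intro conjI allI impI)
  show "u \<in> borel_measurable (lebesgue_on \<Omega>)" using u by (simp add: loc_Lp_def)
  fix K assume K: "compact K \<and> K \<subseteq> \<Omega>"
  then have uK: "u \<in> borel_measurable (lebesgue_on K)" using u loc_Lp_measurable_on_compact by blast
  have "emeasure lborel K < \<infinity>" using K by (intro emeasure_bounded_finite compact_imp_bounded) auto
  then have "emeasure (lebesgue_on K) K < \<infinity>"
    using K by (simp add: emeasure_restrict_space compact_imp_closed borel_closed)
  have "(\<integral>\<^sup>+ x. ennreal (cmod (u x)) \<partial>lebesgue_on K) \<le> (\<integral>\<^sup>+ x. 1 + ennreal (cmod (u x) powr p) \<partial>lebesgue_on K)"
  proof (intro nn_integral_mono)
    fix x
    have "cmod (u x) \<le> 1 + cmod (u x) powr p"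
    proof (cases "cmod (u x) \<le> 1")
      case False
      then have "cmod (u x) powr 1 \<le> cmod (u x) powr p" using p by (intro powr_mono) auto
      then show ?thesis using False by simp
    qed (simp add: add_increasing2)
    then have "ennreal (cmod (u x)) \<le> ennreal (1 + cmod (u x) powr p)" by (rule ennreal_leI)
    then show "ennreal (cmod (u x)) \<le> 1 + ennreal (cmod (u x) powr p)" by (simp add: ennreal_plus)
  qed
  also have "\<dots> = emeasure (lebesgue_on K) (space (lebesgue_on K)) + modp p K u"
    unfolding modp_def using uK by (simp add: nn_integral_add)
  also have "\<dots> < \<infinity>" using u K \<open>emeasure (lebesgue_on K) K < \<infinity>\<close> by (simp add: loc_Lp_iff_modp)
  finally show "integrable (lebesgue_on K) u" by (intro integrableI_bounded uK)
qed

section \<open>The nonlocal modular\<close>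

lemma AE_lebesgue_on_Times:
  fixes S :: "'a::euclidean_space set"
  assumes S: "open S" and ae: "AE x in lebesgue_on S. Q x"
  shows "AE z in lebesgue_on (S \<times> S). Q (fst z) \<and> Q (snd z)"
proof -
  have "AE x in lebesgue. x \<in> S \<longrightarrow> Q x"
    using ae S by (simp add: AE_restrict_space_iff borel_open sets_completionI_sets)
  then have "AE x in lborel. x \<in> S \<longrightarrow> Q x" by (simp add: AE_completion_iff)
  then obtain N where N: "{x \<in> space lborel. \<not> (x \<in> S \<longrightarrow> Q x)} \<subseteq> N"
      "emeasure lborel N = 0" "N \<in> sets lborel"
    by (rule AE_E)
  have "N \<times> UNIV \<union> UNIV \<times> N \<in> null_sets (lborel \<Otimes>\<^sub>M (lborel :: 'a measure))"
    using N by (intro null_sets.Un lborel.times_in_null_sets1 lborel.times_in_null_sets2) (auto simp: null_sets_def)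
  then have "N \<times> UNIV \<union> UNIV \<times> N \<in> null_sets (lborel :: ('a \<times> 'a) measure)" by (simp only: lborel_prod)
  then have "AE z in (lborel :: ('a \<times> 'a) measure). z \<in> S \<times> S \<longrightarrow> Q (fst z) \<and> Q (snd z)"
    by (rule AE_I') (use N in auto)
  then have "AE z in lebesgue. z \<in> S \<times> S \<longrightarrow> Q (fst z) \<and> Q (snd z)" by (simp add: AE_completion_iff)
  moreover have "S \<times> S \<in> sets lebesgue"
    using S by (intro sets_completionI_sets) (simp add: borel_open open_Times)
  ultimately show ?thesis by (subst AE_restrict_space_iff) auto
qed

locale nonlocal_modular =
  fixes \<Omega> :: "'a::euclidean_space set" and a :: "'a \<Rightarrow> real"
    and \<phi> :: "real \<Rightarrow> 'a \<Rightarrow> 'a \<Rightarrow> real" and pm :: real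
  assumes \<Omega>_open: "open \<Omega>"
    and a_measurable: "a \<in> borel_measurable borel"
    and a_nonneg: "\<And>z. a z \<ge> 0"
    and \<phi>_measurable: "\<And>u. loc_integrable \<Omega> u \<Longrightarrow>
       (\<lambda>z. \<phi> (cmod (u (fst z) - u (snd z))) (fst z) (snd z)) \<in> borel_measurable (lebesgue_on (\<Omega> \<times> \<Omega>))"
    and \<phi>_convex: "AE z in lebesgue_on (\<Omega> \<times> \<Omega>). convex_on {0..} (\<lambda>t. \<phi> t (fst z) (snd z)) \<and>
       \<phi> 0 (fst z) (snd z) = 0 \<and> (\<forall>t\<ge>0. 0 \<le> \<phi> t (fst z) (snd z))"
    and pm: "1 \<le> pm"
begin

lemma Ffun_integrand_measurable:
  assumes "loc_Lp pm \<Omega> u"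
  shows "(\<lambda>z. ennreal (\<phi> (cmod (u (fst z) - u (snd z))) (fst z) (snd z) * a (fst z - snd z)))
    \<in> borel_measurable (lebesgue_on (\<Omega> \<times> \<Omega>))"
proof -
  have "(\<lambda>z::'a \<times> 'a. fst z - snd z) \<in> borel_measurable (lebesgue_on (\<Omega> \<times> \<Omega>))"
    by (intro continuous_imp_measurable_on_sets_lebesgue continuous_intros sets_completionI_sets)
      (simp add: borel_open open_Times \<Omega>_open)
  then have "(\<lambda>z. a (fst z - snd z)) \<in> borel_measurable (lebesgue_on (\<Omega> \<times> \<Omega>))"
    using a_measurable by (rule measurable_compose)
  moreover have "(\<lambda>z. \<phi> (cmod (u (fst z) - u (snd z))) (fst z) (snd z)) \<in> borel_measurable (lebesgue_on (\<Omega> \<times> \<Omega>))"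
    using assms pm by (intro \<phi>_measurable loc_Lp_imp_loc_integrable)
  ultimately show ?thesis by measurable
qed

lemma Ffun_rotation: "cmod \<omega> = 1 \<Longrightarrow> Ffun \<Omega> a \<phi> (\<lambda>x. \<omega> * u x) = Ffun \<Omega> a \<phi> u"
  by (simp add: Ffun_def norm_mult flip: right_diff_distrib)

lemma Ffun_eq_0_if_AE_zero:
  assumes "AE x in lebesgue_on \<Omega>. u x = 0"
  shows "Ffun \<Omega> a \<phi> u = 0"
proof -
  have "AE z in lebesgue_on (\<Omega> \<times> \<Omega>).
      ennreal (\<phi> (cmod (u (fst z) - u (snd z))) (fst z) (snd z) * a (fst z - snd z)) = 0"
    using AE_lebesgue_on_Times[OF \<Omega>_open assms] \<phi>_convex by eventually_elim simp
  then show ?thesis unfolding Ffun_def by (simp add: nn_integral_0_iff_AE[symmetric] cong: nn_integral_cong_AE)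
qed

lemma Ffun_convex:
  assumes U: "loc_Lp pm \<Omega> U" and V: "loc_Lp pm \<Omega> V" and \<theta>: "0 \<le> \<theta>" "\<theta> \<le> 1"
  shows "Ffun \<Omega> a \<phi> (\<lambda>x. of_real \<theta> * U x + of_real (1 - \<theta>) * V x)
      \<le> ennreal \<theta> * Ffun \<Omega> a \<phi> U + ennreal (1 - \<theta>) * Ffun \<Omega> a \<phi> V"
proof -
  let ?W = "\<lambda>x. of_real \<theta> * U x + of_real (1 - \<theta>) * V x"
  let ?f = "\<lambda>w z. ennreal (\<phi> (cmod (w (fst z) - w (snd z))) (fst z) (snd z) * a (fst z - snd z))"
  have "AE z in lebesgue_on (\<Omega> \<times> \<Omega>). ?f ?W z \<le> ennreal \<theta> * ?f U z + ennreal (1 - \<theta>) * ?f V z"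
    using \<phi>_convex
  proof eventually_elim
    case (elim z)
    define f where "f = (\<lambda>t. \<phi> t (fst z) (snd z))"
    define A where "A = a (fst z - snd z)"
    define \<alpha> where "\<alpha> = cmod (U (fst z) - U (snd z))"
    define \<gamma> where "\<gamma> = cmod (V (fst z) - V (snd z))"
    have f: "convex_on {0..} f" "f 0 = 0" "\<And>t. 0 \<le> t \<Longrightarrow> 0 \<le> f t" using elim by (auto simp: f_def)
    have A: "0 \<le> A" by (simp add: A_def a_nonneg)
    have "?W (fst z) - ?W (snd z)
        = of_real \<theta> * (U (fst z) - U (snd z)) + of_real (1 - \<theta>) * (V (fst z) - V (snd z))"
      by (simp add: algebra_simps)
    then have "f (cmod (?W (fst z) - ?W (snd z))) \<le> \<theta> * f \<alpha> + (1 - \<theta>) * f \<gamma>"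
      unfolding \<alpha>_def \<gamma>_def by (simp only: convex_on_nonneg_norm_combination[OF f \<theta>])
    then have "f (cmod (?W (fst z) - ?W (snd z))) * A \<le> (\<theta> * f \<alpha> + (1 - \<theta>) * f \<gamma>) * A"
      using A by (rule mult_right_mono)
    then have "ennreal (f (cmod (?W (fst z) - ?W (snd z))) * A) \<le> ennreal (\<theta> * (f \<alpha> * A) + (1 - \<theta>) * (f \<gamma> * A))"
      by (intro ennreal_leI) (simp add: algebra_simps)
    also have "\<dots> = ennreal \<theta> * ennreal (f \<alpha> * A) + ennreal (1 - \<theta>) * ennreal (f \<gamma> * A)"
      using \<theta> A f(3)[of \<alpha>] f(3)[of \<gamma>] by (simp add: \<alpha>_def \<gamma>_def ennreal_plus ennreal_mult)
    finally show ?case unfolding f_def A_def \<alpha>_def \<gamma>_def .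
  qed
  then have "Ffun \<Omega> a \<phi> ?W \<le> (\<integral>\<^sup>+ z. ennreal \<theta> * ?f U z + ennreal (1 - \<theta>) * ?f V z \<partial>lebesgue_on (\<Omega> \<times> \<Omega>))"
    unfolding Ffun_def by (rule nn_integral_mono_AE)
  also have "\<dots> = ennreal \<theta> * Ffun \<Omega> a \<phi> U + ennreal (1 - \<theta>) * Ffun \<Omega> a \<phi> V"
    unfolding Ffun_def using Ffun_integrand_measurable[OF U] Ffun_integrand_measurable[OF V]
    by (simp add: nn_integral_add nn_integral_cmult)
  finally show ?thesis .
qed

lemma convex_modular_Ffun: "convex_modular (loc_Lp pm \<Omega>) (Ffun \<Omega> a \<phi>)"
proof
  show "loc_Lp pm \<Omega> (\<lambda>_. 0)" by (simp add: loc_Lp_def)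
  show "loc_Lp pm \<Omega> (\<lambda>x. c * w x)" if "loc_Lp pm \<Omega> w" for w c using that by (rule loc_Lp_cmult)
  show "Ffun \<Omega> a \<phi> (\<lambda>_. 0) = 0" by (simp add: Ffun_eq_0_if_AE_zero)
  show "Ffun \<Omega> a \<phi> (\<lambda>x. \<omega> * w x) = Ffun \<Omega> a \<phi> w" if "cmod \<omega> = 1" for w \<omega>
    using that by (rule Ffun_rotation)
qed (rule Ffun_convex)

lemma convex_modular_modp_loc_Lp: "convex_modular (loc_Lp pm \<Omega>) (modp pm \<Omega>)"
proof (rule convex_modular_restrict[OF convex_modular_modp[OF pm]])
  show "loc_Lp pm \<Omega> (\<lambda>_. 0)" by (simp add: loc_Lp_def)
  show "loc_Lp pm \<Omega> (\<lambda>x. c * w x)" if "loc_Lp pm \<Omega> w" for w c using that by (rule loc_Lp_cmult)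
  show "w \<in> borel_measurable (lebesgue_on \<Omega>)" if "loc_Lp pm \<Omega> w" for w
    using that by (simp add: loc_Lp_def)
qed

lemma Gfun_eq: "Gfun pm \<Omega> a \<phi> = (\<lambda>w. Ffun \<Omega> a \<phi> w + modp pm \<Omega> w)"
  by (simp add: fun_eq_iff Gfun_def)

sublocale F: convex_modular "loc_Lp pm \<Omega>" "Ffun \<Omega> a \<phi>" by (rule convex_modular_Ffun)
sublocale M: convex_modular "loc_Lp pm \<Omega>" "modp pm \<Omega>" by (rule convex_modular_modp_loc_Lp)
sublocale G: convex_modular "loc_Lp pm \<Omega>" "Gfun pm \<Omega> a \<phi>"
  unfolding Gfun_eq by (intro convex_modular_add convex_modular_Ffun convex_modular_modp_loc_Lp)

lemma fnorm_eq_gauge_sum: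
  "loc_Lp pm \<Omega> u \<Longrightarrow> fnorm pm \<Omega> a \<phi> u = gauge (Ffun \<Omega> a \<phi>) u + gauge (modp pm \<Omega>) u"
  using pm by (simp add: fnorm_def seminorm_p_def gauge_modp loc_Lp_def)

lemma gnorm_le_fnorm:
  assumes "loc_Lp pm \<Omega> u"
  shows "gnorm pm \<Omega> a \<phi> u \<le> fnorm pm \<Omega> a \<phi> u"
  using gauge_add_le[OF convex_modular_Ffun convex_modular_modp_loc_Lp assms] assms
  by (simp add: gnorm_def Gfun_eq fnorm_eq_gauge_sum)

lemma fnorm_le_2_gnorm: "loc_Lp pm \<Omega> u \<Longrightarrow> fnorm pm \<Omega> a \<phi> u / 2 \<le> gnorm pm \<Omega> a \<phi> u"
proof (rule divide_le_posI_ennreal)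
  assume u: "loc_Lp pm \<Omega> u"
  have "gauge (Ffun \<Omega> a \<phi>) u \<le> gnorm pm \<Omega> a \<phi> u" "gauge (modp pm \<Omega>) u \<le> gnorm pm \<Omega> a \<phi> u"
    unfolding gnorm_def Gfun_eq by (auto intro: gauge_mono)
  then show "fnorm pm \<Omega> a \<phi> u \<le> 2 * gnorm pm \<Omega> a \<phi> u"
    using u by (simp add: fnorm_eq_gauge_sum mult_2 add_mono)
qed simp

lemma gnorm_eq_0_iff:
  assumes u: "loc_Lp pm \<Omega> u"
  shows "gnorm pm \<Omega> a \<phi> u = 0 \<longleftrightarrow> (AE x in lebesgue_on \<Omega>. u x = 0)"
proof -
  have um: "u \<in> borel_measurable (lebesgue_on \<Omega>)" using u by (simp add: loc_Lp_def)
  have "Lp_norm pm \<Omega> u \<le> gnorm pm \<Omega> a \<phi> u"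
    using um pm by (simp add: gnorm_def Gfun_eq gauge_modp[symmetric] gauge_mono)
  then have "gnorm pm \<Omega> a \<phi> u = 0 \<Longrightarrow> AE x in lebesgue_on \<Omega>. u x = 0"
    using um pm by (simp add: Lp_norm_eq_0_iff)
  moreover have "gnorm pm \<Omega> a \<phi> u = 0" if ae: "AE x in lebesgue_on \<Omega>. u x = 0"
    unfolding gnorm_def
  proof (rule gauge_eq_0I)
    fix l :: real
    have ae_l: "AE x in lebesgue_on \<Omega>. u x / of_real l = 0" using ae by eventually_elim simp
    have "(\<lambda>x. u x / of_real l) \<in> borel_measurable (lebesgue_on \<Omega>)" using um by measurable
    then have "modp pm \<Omega> (\<lambda>x. u x / of_real l) = 0" using ae_l modp_eq_0_iff by blast
    moreover have "Ffun \<Omega> a \<phi> (\<lambda>x. u x / of_real l) = 0" using ae_l by (rule Ffun_eq_0_if_AE_zero)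
    ultimately show "Gfun pm \<Omega> a \<phi> (\<lambda>x. u x / of_real l) \<le> 1" by (simp add: Gfun_def)
  qed
  ultimately show ?thesis by blast
qed

lemma fnorm_cmult: "loc_Lp pm \<Omega> u \<Longrightarrow> fnorm pm \<Omega> a \<phi> (\<lambda>x. c * u x) = ennreal (cmod c) * fnorm pm \<Omega> a \<phi> u"
  by (simp add: fnorm_eq_gauge_sum loc_Lp_cmult F.gauge_cmult M.gauge_cmult distrib_left)

lemma fnorm_triangle:
  assumes u: "loc_Lp pm \<Omega> u" and v: "loc_Lp pm \<Omega> v"
  shows "fnorm pm \<Omega> a \<phi> (\<lambda>x. u x + v x) \<le> fnorm pm \<Omega> a \<phi> u + fnorm pm \<Omega> a \<phi> v"
proof -
  have "fnorm pm \<Omega> a \<phi> (\<lambda>x. u x + v x)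
      = gauge (Ffun \<Omega> a \<phi>) (\<lambda>x. u x + v x) + gauge (modp pm \<Omega>) (\<lambda>x. u x + v x)"
    using u v pm by (simp add: fnorm_eq_gauge_sum loc_Lp_add)
  also have "\<dots> \<le> (gauge (Ffun \<Omega> a \<phi>) u + gauge (Ffun \<Omega> a \<phi>) v) + (gauge (modp pm \<Omega>) u + gauge (modp pm \<Omega>) v)"
    using u v by (intro add_mono F.gauge_triangle M.gauge_triangle)
  also have "\<dots> = fnorm pm \<Omega> a \<phi> u + fnorm pm \<Omega> a \<phi> v"
    using u v by (simp add: fnorm_eq_gauge_sum add_ac)
  finally show ?thesis .
qed

lemma gnorm_cmult: "gnorm pm \<Omega> a \<phi> (\<lambda>x. c * u x) = ennreal (cmod c) * gnorm pm \<Omega> a \<phi> u"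
  unfolding gnorm_def by (rule G.gauge_cmult)

lemma gnorm_triangle:
  "loc_Lp pm \<Omega> u \<Longrightarrow> loc_Lp pm \<Omega> v \<Longrightarrow> gnorm pm \<Omega> a \<phi> (\<lambda>x. u x + v x) \<le> gnorm pm \<Omega> a \<phi> u + gnorm pm \<Omega> a \<phi> v"
  unfolding gnorm_def by (rule G.gauge_triangle)

lemma Lspace_add: "u \<in> Lspace pm \<Omega> a \<phi> \<Longrightarrow> v \<in> Lspace pm \<Omega> a \<phi> \<Longrightarrow> (\<lambda>x. u x + v x) \<in> Lspace pm \<Omega> a \<phi>"
  unfolding Lspace_def using pm fnorm_triangle[of u v]
  by (auto simp: loc_Lp_add intro: le_less_trans)

lemma Lspace_cmult: "u \<in> Lspace pm \<Omega> a \<phi> \<Longrightarrow> (\<lambda>x. c * u x) \<in> Lspace pm \<Omega> a \<phi>"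
  unfolding Lspace_def by (auto simp: loc_Lp_cmult fnorm_cmult ennreal_mult_less_top)

end

theorem theorem2p2:
  fixes \<Omega> :: "'a::euclidean_space set"
    and a :: "'a \<Rightarrow> real"
    and \<phi> :: "real \<Rightarrow> 'a \<Rightarrow> 'a \<Rightarrow> real"
    and r0 c0 pm pp \<beta> c1 :: real
  assumes \<Omega>_open: "open \<Omega>"
    and a_int: "integrable lborel a"
    and a_nonneg: "\<And>z. a z \<ge> 0"
    and r0_pos: "r0 > 0" and c0_pos: "c0 > 0"
    and a_ball: "AE z in lebesgue_on (ball 0 r0). a z \<ge> c0"
    and components_close: "\<not> connected \<Omega> \<Longrightarrow>
       (\<exists>C :: nat \<Rightarrow> 'a set. \<exists>N :: enat.
          bij_betw C {i. enat i < N} (components \<Omega>) \<and>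
          (\<forall>i. enat (Suc i) < N \<longrightarrow> setdist (C i) (C (Suc i)) < 2 * r0))"
    and \<phi>_nonneg: "\<And>t x y. t \<ge> 0 \<Longrightarrow> x \<in> \<Omega> \<Longrightarrow> y \<in> \<Omega> \<Longrightarrow> \<phi> t x y \<ge> 0"
    and C1: "\<And>u. loc_integrable \<Omega> u \<Longrightarrow>
       (\<lambda>z. \<phi> (cmod (u (fst z) - u (snd z))) (fst z) (snd z)) \<in> borel_measurable (lebesgue_on (\<Omega> \<times> \<Omega>))"
    and C2: "\<And>\<epsilon>. \<epsilon> > 0 \<Longrightarrow> \<exists>\<delta>. 0 < \<delta> \<and> \<delta> < 1 \<and>
       (AE z in lebesgue_on (\<Omega> \<times> \<Omega>). \<forall>s t. s > 0 \<and> t > 0 \<and> \<bar>s - t\<bar> \<ge> \<epsilon> * max s t \<longrightarrow>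
          \<phi> ((s + t) / 2) (fst z) (snd z) \<le> (1 - \<delta>) * ((\<phi> s (fst z) (snd z) + \<phi> t (fst z) (snd z)) / 2))"
    and p_bounds: "1 < pm" "pm \<le> pp" and \<beta>_ge: "\<beta> \<ge> 1"
    and C3: "AE z in lebesgue_on (\<Omega> \<times> \<Omega>).
       almost_incr_on {0<..} \<beta> (\<lambda>t. \<phi> t (fst z) (snd z) / t powr pm) \<and>
       almost_decr_on {0<..} \<beta> (\<lambda>t. \<phi> t (fst z) (snd z) / t powr pp)"
    and c1_pos: "c1 > 0"
    and C4: "AE z in lebesgue_on (\<Omega> \<times> \<Omega>).
       1 / c1 \<le> \<phi> 1 (fst z) (snd z) \<and> \<phi> 1 (fst z) (snd z) \<le> c1 \<and>
       \<phi> 0 (fst z) (snd z) = 0 \<and> (\<forall>t>0. \<phi> t (fst z) (snd z) > 0)"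
  shows
    "(\<forall>u\<in>Lspace pm \<Omega> a \<phi>. \<forall>v\<in>Lspace pm \<Omega> a \<phi>. \<forall>c::complex.
        (\<lambda>x. u x + v x) \<in> Lspace pm \<Omega> a \<phi> \<and> (\<lambda>x. c * u x) \<in> Lspace pm \<Omega> a \<phi>)
     \<and> (\<forall>u\<in>Lspace pm \<Omega> a \<phi>. gnorm pm \<Omega> a \<phi> u < \<infinity>)
     \<and> (\<forall>u\<in>Lspace pm \<Omega> a \<phi>.
          gnorm pm \<Omega> a \<phi> u = 0 \<longleftrightarrow> (AE x in lebesgue_on \<Omega>. u x = 0))
     \<and> (\<forall>u\<in>Lspace pm \<Omega> a \<phi>. \<forall>c::complex.
          gnorm pm \<Omega> a \<phi> (\<lambda>x. c * u x) = ennreal (cmod c) * gnorm pm \<Omega> a \<phi> u)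
     \<and> (\<forall>u\<in>Lspace pm \<Omega> a \<phi>. \<forall>v\<in>Lspace pm \<Omega> a \<phi>.
          gnorm pm \<Omega> a \<phi> (\<lambda>x. u x + v x) \<le> gnorm pm \<Omega> a \<phi> u + gnorm pm \<Omega> a \<phi> v)
     \<and> (\<forall>u\<in>Lspace pm \<Omega> a \<phi>.
          fnorm pm \<Omega> a \<phi> u / 2 \<le> gnorm pm \<Omega> a \<phi> u \<and>
          gnorm pm \<Omega> a \<phi> u \<le> ennreal (\<beta> powr (1 / pm)) * fnorm pm \<Omega> a \<phi> u)"
proof -
  have \<phi>_convex: "AE z in lebesgue_on (\<Omega> \<times> \<Omega>). convex_on {0..} (\<lambda>t. \<phi> t (fst z) (snd z)) \<and>
      \<phi> 0 (fst z) (snd z) = 0 \<and> (\<forall>t\<ge>0. 0 \<le> \<phi> t (fst z) (snd z))"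
    using C4 p_bounds
    by (intro AE_convex_on_if_uniformly_midpoint_convex[where f = "\<lambda>z t. \<phi> t (fst z) (snd z)", OF C2 C3])
      (auto elim: eventually_mono)
  interpret nonlocal_modular \<Omega> a \<phi> pm
    using \<Omega>_open a_int a_nonneg C1 \<phi>_convex p_bounds by unfold_locales auto
  have Lspace: "loc_Lp pm \<Omega> u" "fnorm pm \<Omega> a \<phi> u < \<infinity>" if "u \<in> Lspace pm \<Omega> a \<phi>" for u
    using that by (simp_all add: Lspace_def)
  have "1 \<le> ennreal (\<beta> powr (1 / pm))" using \<beta>_ge p_bounds by (simp add: ge_one_powr_ge_zero)
  then have \<beta>_factor: "fnorm pm \<Omega> a \<phi> u \<le> ennreal (\<beta> powr (1 / pm)) * fnorm pm \<Omega> a \<phi> u" for u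
    using mult_right_mono[of 1 "ennreal (\<beta> powr (1 / pm))" "fnorm pm \<Omega> a \<phi> u"] by simp
  have "gnorm pm \<Omega> a \<phi> u < \<infinity>" if "u \<in> Lspace pm \<Omega> a \<phi>" for u
    using le_less_trans[OF gnorm_le_fnorm Lspace(2)] Lspace(1) that by blast
  then show ?thesis
    using Lspace_add Lspace_cmult gnorm_eq_0_iff gnorm_cmult gnorm_triangle fnorm_le_2_gnorm
      order_trans[OF gnorm_le_fnorm \<beta>_factor]
    by (simp add: Lspace)
qed

end
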